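(* Let $Y$ be a finite set. The map sending a diversity $\delta$ on $Y$ to the distance $d_\delta$ on $\mathcal{P}_{\neq\emptyset}(Y)$ is injective.
   Context: $\mathcal{P}_{\neq\emptyset}(Y)$ is the set of non-empty subsets of $Y$. A diversity on $Y$ is $\delta:\mathcal{P}(Y)\to\mathbb{R}$ with (D1) $\delta(A\cup B)+\delta(B\cup C)\ge\delta(A\cup C)$ for all $A,C\subseteq Y$ and non-empty $B\subseteq Y$, and (D2) $\delta(A)=0$ whenever $|A|\le1$. For $A,B\in\mathcal{P}_{\neq\emptyset}(Y)$: $d_\delta(A,B)=\max(0,\delta(A\cup B)-\delta(A)-\delta(B))$ if $A\ne B$ and $d_\delta(A,A)=0$. *)

theory Defs
  imports Main "HOL.Real"
begin

text \<open>A diversity on Y: a real-valued function on the subsets of Y satisfying (D1) and (D2).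
  Values on sets not contained in Y are irrelevant.\<close>
definition diversity :: "'a set \<Rightarrow> ('a set \<Rightarrow> real) \<Rightarrow> bool" where
  "diversity Y \<delta> \<longleftrightarrow>
     (\<forall>A B C. A \<subseteq> Y \<and> B \<subseteq> Y \<and> C \<subseteq> Y \<and> B \<noteq> {} \<longrightarrow>
        \<delta> (A \<union> B) + \<delta> (B \<union> C) \<ge> \<delta> (A \<union> C)) \<and>
     (\<forall>A. A \<subseteq> Y \<and> card A \<le> 1 \<longrightarrow> \<delta> A = 0)"

definition div_dist :: "('a set \<Rightarrow> real) \<Rightarrow> 'a set \<Rightarrow> 'a set \<Rightarrow> real" where
  "div_dist \<delta> A B = (if A = B then 0 else max 0 (\<delta> (A \<union> B) - \<delta> A - \<delta> B))"

end

theory Submission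
  imports Defs
begin

(* A diversity on a finite set Y is recovered from its induced distance by
   peeling off one point at a time.  Monotonicity (from D1 with C = {} and
   D2 for singletons) shows that adding a point x to a non-empty set F never
   decreases delta, so the truncation max 0 in d_delta({x},F) is inactive and
     delta(insert x F) = delta F + d_delta({x}, F).
   Induction over finite subsets then shows that two diversities with the
   same induced distance agree on every subset of Y: both vanish on sets of
   size at most one, and each insertion step adds the same distance term. *)

lemma diversity_small:
  assumes "diversity Y \<delta>" "A \<subseteq> Y" "card A \<le> 1"
  shows "\<delta> A = 0"
  using assms unfolding diversity_def by blast

text \<open>Diversities are monotone under adding a point: axiom D1 with
  \<open>B = {x}\<close>, \<open>C = {}\<close>, together with \<open>\<delta> {x} = 0\<close>.\<close>
lemma diversity_mono_insert:
  assumes div: "diversity Y \<delta>" and "insert x F \<subseteq> Y"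
  shows "\<delta> F \<le> \<delta> (insert x F)"
proof -
  have "F \<subseteq> Y" "{x} \<subseteq> Y" using assms(2) by auto
  then have "\<delta> (F \<union> {x}) + \<delta> ({x} \<union> {}) \<ge> \<delta> (F \<union> {})"
    using div unfolding diversity_def by blast
  moreover have "\<delta> {x} = 0" using diversity_small[OF div] \<open>{x} \<subseteq> Y\<close> by simp
  ultimately show ?thesis by simp
qed

lemma diversity_insert_eq_div_dist:
  assumes div: "diversity Y \<delta>" and "insert x F \<subseteq> Y" and "x \<notin> F"
  shows "\<delta> (insert x F) = \<delta> F + div_dist \<delta> {x} F"
proof -
  have "\<delta> {x} = 0" using diversity_small[OF div] assms(2) by simp
  moreover have "{x} \<noteq> F" using \<open>x \<notin> F\<close> by auto
  moreover have "\<delta> F \<le> \<delta> (insert x F)" using diversity_mono_insert[OF div assms(2)] .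
  ultimately show ?thesis unfolding div_dist_def by auto
qed

lemma diversity_eq_on_finite:
  assumes div1: "diversity Y \<delta>1" and div2: "diversity Y \<delta>2"
    and dist: "\<And>x F. insert x F \<subseteq> Y \<Longrightarrow> F \<noteq> {} \<Longrightarrow>
                  div_dist \<delta>1 {x} F = div_dist \<delta>2 {x} F"
    and "finite A" "A \<subseteq> Y"
  shows "\<delta>1 A = \<delta>2 A"
  using \<open>finite A\<close> \<open>A \<subseteq> Y\<close>
proof (induction A rule: finite_induct)
  case empty
  then show ?case using diversity_small[OF div1] diversity_small[OF div2] by simp
next
  case (insert x F)
  show ?case
  proof (cases "F = {}")
    case True
    then show ?thesis
      using diversity_small[OF div1 insert.prems] diversity_small[OF div2 insert.prems] by simp
  next
    case False
    then show ?thesis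
      using diversity_insert_eq_div_dist[OF div1 insert.prems insert.hyps(2)]
        diversity_insert_eq_div_dist[OF div2 insert.prems insert.hyps(2)]
        dist[OF insert.prems False] insert.IH insert.prems by simp
  qed
qed

theorem mainTheorem14:
  fixes Y :: "'a set" and \<delta>1 \<delta>2 :: "'a set \<Rightarrow> real"
  assumes "finite Y"
    and "diversity Y \<delta>1" and "diversity Y \<delta>2"
    and "\<forall>A B. A \<subseteq> Y \<and> A \<noteq> {} \<and> B \<subseteq> Y \<and> B \<noteq> {} \<longrightarrow>
               div_dist \<delta>1 A B = div_dist \<delta>2 A B"
  shows "\<forall>A. A \<subseteq> Y \<longrightarrow> \<delta>1 A = \<delta>2 A"
proof (intro allI impI)
  fix A assume "A \<subseteq> Y"
  moreover have "finite A" using \<open>A \<subseteq> Y\<close> \<open>finite Y\<close> finite_subset by blast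
  moreover have "div_dist \<delta>1 {x} F = div_dist \<delta>2 {x} F"
    if "insert x F \<subseteq> Y" "F \<noteq> {}" for x F
    using assms(4) that by simp
  ultimately show "\<delta>1 A = \<delta>2 A"
    using diversity_eq_on_finite[OF assms(2,3)] by blast
qed

end
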